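(* Let $d\ge 2$ and let $A$ be a finite set of hyperplanes in $\mathbb{R}^d$. For every open halfspace $S_1$ and every set $S_2\subseteq\mathbb{R}^d$, $$\mu_A(S_1\cup S_2)\le R_d\big(\mu_A(S_1)+1,\ \mu_A(S_2)+1\big)-1.$$
   Context: For a finite set $A$ of hyperplanes in $\mathbb{R}^d$, $V(A)$ (the vertices of the arrangement) is the set of points that are the unique common point of some $d$ hyperplanes of $A$. For $S\subseteq\mathbb{R}^d$, $\mu_A(S)=\max\{|A'| : A'\subseteq A,\ V(A')\subseteq S\}$. For positive integers $p,a,b$, $R_p(a,b)$ is the hypergraph Ramsey number: the least $R$ such that for every set $S$ of size $R$ and every 2-colouring of the $p$-element subsets of $S$ with colours 1 and 2, there is either an $a$-element subset all of whose $p$-subsets have colour 1 or a $b$-element subset all of whose $p$-subsets have colour 2. *)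

theory Defs
  imports "HOL-Analysis.Analysis"
begin

definition is_hyperplane :: "'a::euclidean_space set \<Rightarrow> bool" where
  "is_hyperplane H \<longleftrightarrow> (\<exists>a b. a \<noteq> 0 \<and> H = {x. inner a x = b})"

definition is_open_halfspace :: "'a::euclidean_space set \<Rightarrow> bool" where
  "is_open_halfspace S \<longleftrightarrow> (\<exists>a b. a \<noteq> 0 \<and> S = {x. inner a x > b})"

definition vertices :: "'a::euclidean_space set set \<Rightarrow> 'a set" where
  "vertices A = {p. \<exists>B. B \<subseteq> A \<and> card B = DIM('a) \<and> \<Inter>B = {p}}"

definition mu :: "'a::euclidean_space set set \<Rightarrow> 'a set \<Rightarrow> nat" where
  "mu A S = Max {card A' | A'. A' \<subseteq> A \<and> vertices A' \<subseteq> S}"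

definition ramsey_prop :: "nat \<Rightarrow> nat \<Rightarrow> nat \<Rightarrow> nat \<Rightarrow> bool" where
  "ramsey_prop p a b R \<longleftrightarrow>
     (\<forall>S::nat set. finite S \<and> card S = R \<longrightarrow>
       (\<forall>f :: nat set \<Rightarrow> nat. (\<forall>e. e \<subseteq> S \<and> card e = p \<longrightarrow> f e \<in> {1,2}) \<longrightarrow>
          (\<exists>T\<subseteq>S. card T = a \<and> (\<forall>e. e \<subseteq> T \<and> card e = p \<longrightarrow> f e = 1)) \<or>
          (\<exists>T\<subseteq>S. card T = b \<and> (\<forall>e. e \<subseteq> T \<and> card e = p \<longrightarrow> f e = 2))))"

definition ramsey_number :: "nat \<Rightarrow> nat \<Rightarrow> nat \<Rightarrow> nat" where
  "ramsey_number p a b = (LEAST R. ramsey_prop p a b R)"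

end

theory Submission
  imports Defs "HOL-Library.Ramsey"
begin

(* Take a subarrangement A' of A with card A' = mu A (S1 \<union> S2) whose
   vertices all lie in S1 \<union> S2, and suppose card A' \<ge> R = R_d(mu A S1 + 1, mu A S2 + 1).
   Colour each d-element subset B of A' by whether its vertex (if \<Inter>B is a single
   point) lies in S1.  Ramsey's theorem gives either mu A S1 + 1 hyperplanes all of
   whose vertices lie in S1, or mu A S2 + 1 hyperplanes all of whose vertices avoid
   S1 and hence lie in S2; both contradict the maximality in the definition of mu. *)

definition homogeneous :: "nat \<Rightarrow> ('b set \<Rightarrow> bool) \<Rightarrow> 'b set \<Rightarrow> bool" where
  "homogeneous p P T \<longleftrightarrow> (\<forall>e. e \<subseteq> T \<and> card e = p \<longrightarrow> P e)"

lemma homogeneous_mono: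
  assumes "homogeneous p P T" and "\<And>e. P e \<Longrightarrow> Q e"
  shows "homogeneous p Q T"
  using assms unfolding homogeneous_def by blast

lemma homogeneous_image:
  assumes "inj_on g T"
  shows "homogeneous p P (g ` T) \<longleftrightarrow> homogeneous p (\<lambda>e. P (g ` e)) T"
proof
  assume hom: "homogeneous p P (g ` T)"
  show "homogeneous p (\<lambda>e. P (g ` e)) T"
    unfolding homogeneous_def
  proof (intro allI impI)
    fix e assume e: "e \<subseteq> T \<and> card e = p"
    then have "card (g ` e) = p" using assms card_image inj_on_subset by metis
    with e hom show "P (g ` e)" unfolding homogeneous_def by blast
  qed
next
  assume hom: "homogeneous p (\<lambda>e. P (g ` e)) T"
  show "homogeneous p P (g ` T)"
    unfolding homogeneous_def
  proof (intro allI impI)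
    fix e assume e: "e \<subseteq> g ` T \<and> card e = p"
    let ?e' = "T \<inter> g -` e"
    have image: "g ` ?e' = e" using e by auto
    moreover have "card ?e' = p"
      using card_image[of g ?e'] assms e image by (metis inf_le1 inj_on_subset)
    ultimately show "P e" using hom unfolding homogeneous_def by (metis inf_le1)
  qed
qed

lemma partn_lst_two_colours:
  assumes "partn_lst X [a, b] p"
  shows "\<exists>T\<subseteq>X. (card T = a \<and> homogeneous p P T) \<or>
                (card T = b \<and> homogeneous p (\<lambda>e. \<not> P e) T)"
proof -
  define f where "f e = (if P e then 0 else 1 :: nat)" for e
  have "f \<in> [X]\<^bsup>p\<^esup> \<rightarrow> {..<2}" by (auto simp: f_def)
  then obtain i H where i: "i < 2" and H: "H \<in> [X]\<^bsup>([a, b] ! i)\<^esup>"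
    and mono: "f ` [H]\<^bsup>p\<^esup> \<subseteq> {i}"
    using partn_lstE[OF assms] by (metis length_Cons list.size(3) numeral_2_eq_2)
  have colour: "f e = i" if "e \<subseteq> H" "card e = p" for e
  proof -
    have "finite e" using H that(1) finite_subset by (auto simp: nsets_def)
    then show ?thesis using mono that by (auto simp: nsets_def)
  qed
  have "H \<subseteq> X" "card H = [a, b] ! i" using H by (auto simp: nsets_def)
  moreover have "homogeneous p (\<lambda>e. f e = i) H"
    using colour unfolding homogeneous_def by blast
  moreover have "(\<lambda>e. f e = 0) = P" "(\<lambda>e. f e = 1) = (\<lambda>e. \<not> P e)"
    by (auto simp: f_def)
  ultimately show ?thesis
    using i less_2_cases by (metis nth_Cons_0 nth_Cons_Suc One_nat_def)
qed

lemma ramsey_prop_exists: "\<exists>R. ramsey_prop p a b R"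
proof -
  obtain N :: nat where N: "partn_lst {..<N} [a, b] p" using ramsey_full by blast
  have "ramsey_prop p a b N"
    unfolding ramsey_prop_def
  proof (intro allI impI)
    fix S :: "nat set" and f :: "nat set \<Rightarrow> nat"
    assume S: "finite S \<and> card S = N"
      and f: "\<forall>e. e \<subseteq> S \<and> card e = p \<longrightarrow> f e \<in> {1,2}"
    obtain g where g: "bij_betw g {..<N} S"
      using ex_bij_betw_nat_finite S by (metis atLeast0LessThan)
    obtain T where T: "T \<subseteq> {..<N}"
      and hom: "(card T = a \<and> homogeneous p (\<lambda>e. f (g ` e) = 1) T) \<or>
                (card T = b \<and> homogeneous p (\<lambda>e. f (g ` e) \<noteq> 1) T)"
      using partn_lst_two_colours[OF N] by blast
    have inj: "inj_on g T" using g T bij_betw_imp_inj_on inj_on_subset by blast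
    have gT: "g ` T \<subseteq> S" using g T bij_betw_imp_surj_on by blast
    have card_gT: "card (g ` T) = card T" using card_image[OF inj] .
    have "homogeneous p (\<lambda>e. f e \<noteq> 1) (g ` T) \<Longrightarrow> homogeneous p (\<lambda>e. f e = 2) (g ` T)"
      using f gT unfolding homogeneous_def by blast
    then have "(card (g ` T) = a \<and> homogeneous p (\<lambda>e. f e = 1) (g ` T)) \<or>
               (card (g ` T) = b \<and> homogeneous p (\<lambda>e. f e = 2) (g ` T))"
      using hom card_gT homogeneous_image[OF inj, of p "\<lambda>e. f e = 1"]
        homogeneous_image[OF inj, of p "\<lambda>e. f e \<noteq> 1"] by auto
    with gT show "(\<exists>T\<subseteq>S. card T = a \<and> (\<forall>e. e \<subseteq> T \<and> card e = p \<longrightarrow> f e = 1)) \<or>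
          (\<exists>T\<subseteq>S. card T = b \<and> (\<forall>e. e \<subseteq> T \<and> card e = p \<longrightarrow> f e = 2))"
      unfolding homogeneous_def by blast
  qed
  then show ?thesis by blast
qed

lemma ramsey_prop_ramsey_number: "ramsey_prop p a b (ramsey_number p a b)"
  unfolding ramsey_number_def using ramsey_prop_exists by (rule LeastI_ex)

lemma ramsey_number_colouring:
  fixes X :: "'b set"
  assumes "finite X" and "card X \<ge> ramsey_number p a b"
  shows "\<exists>T\<subseteq>X. (card T = a \<and> homogeneous p P T) \<or>
                (card T = b \<and> homogeneous p (\<lambda>e. \<not> P e) T)"
proof -
  let ?R = "ramsey_number p a b"
  obtain Y where Y: "Y \<subseteq> X" "card Y = ?R"
    using obtain_subset_with_card_n assms(2) by metis
  obtain g where g: "bij_betw g {0..<?R} Y"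
    using ex_bij_betw_nat_finite Y assms(1) finite_subset by metis
  define f where "f e = (if P (g ` e) then 1 else 2 :: nat)" for e
  have "(\<exists>T\<subseteq>{0..<?R}. card T = a \<and> homogeneous p (\<lambda>e. f e = 1) T) \<or>
        (\<exists>T\<subseteq>{0..<?R}. card T = b \<and> homogeneous p (\<lambda>e. f e = 2) T)"
    using ramsey_prop_ramsey_number[of p a b] unfolding ramsey_prop_def homogeneous_def
    by (elim allE[of _ "{0..<?R}"] allE[of _ f]) (auto simp: f_def)
  moreover have "(\<lambda>e. f e = 1) = (\<lambda>e. P (g ` e))" "(\<lambda>e. f e = 2) = (\<lambda>e. \<not> P (g ` e))"
    by (auto simp: f_def)
  ultimately obtain T where T: "T \<subseteq> {0..<?R}"
    and hom: "(card T = a \<and> homogeneous p (\<lambda>e. P (g ` e)) T) \<or>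
              (card T = b \<and> homogeneous p (\<lambda>e. \<not> P (g ` e)) T)"
    by auto
  have inj: "inj_on g T" using g T bij_betw_imp_inj_on inj_on_subset by blast
  have "g ` T \<subseteq> X" using g T Y(1) bij_betw_imp_surj_on by blast
  with hom show ?thesis
    using homogeneous_image[OF inj, of p P] homogeneous_image[OF inj, of p "\<lambda>e. \<not> P e"]
      card_image[OF inj] by auto
qed

lemma vertices_mono: "A \<subseteq> B \<Longrightarrow> vertices A \<subseteq> vertices B"
  unfolding vertices_def by blast

lemma vertices_subset_iff_homogeneous:
  fixes T :: "'a::euclidean_space set set"
  shows "vertices T \<subseteq> S \<longleftrightarrow> homogeneous DIM('a) (\<lambda>B. \<forall>x. \<Inter>B = {x} \<longrightarrow> x \<in> S) T"
  unfolding vertices_def homogeneous_def by blast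

text \<open>For finite A, mu is the maximum of a finite nonempty set (the empty
  subarrangement has no vertices), hence attained and an upper bound.\<close>
lemma mu_candidates_finite:
  assumes "finite A"
  shows "finite {card A' | A'. A' \<subseteq> A \<and> vertices A' \<subseteq> S}"
proof -
  have "{card A' | A'. A' \<subseteq> A \<and> vertices A' \<subseteq> S} \<subseteq> card ` Pow A" by auto
  then show ?thesis using assms finite_subset by blast
qed

lemma mu_ge:
  assumes "finite A" "A' \<subseteq> A" "vertices A' \<subseteq> S"
  shows "card A' \<le> mu A S"
  unfolding mu_def using assms mu_candidates_finite[OF assms(1)] by (intro Max_ge) auto

lemma mu_attained:
  assumes "finite A"
  obtains A' where "A' \<subseteq> A" "vertices A' \<subseteq> S" "card A' = mu A S"
proof -
  have "vertices {} = ({} :: 'a set)" unfolding vertices_def by auto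
  then have "{card A' | A'. A' \<subseteq> A \<and> vertices A' \<subseteq> S} \<noteq> {}" by blast
  then have "mu A S \<in> {card A' | A'. A' \<subseteq> A \<and> vertices A' \<subseteq> S}"
    unfolding mu_def using Max_in mu_candidates_finite[OF assms] by blast
  then show ?thesis using that by auto
qed

text \<open>The bound holds for arbitrary regions S1, S2: colour each DIM('a)-set of
  hyperplanes by whether its vertex lies in S1.\<close>
lemma mu_union_less_ramsey_number:
  fixes A :: "'a::euclidean_space set set"
  assumes "finite A"
  shows "mu A (S1 \<union> S2) < ramsey_number DIM('a) (mu A S1 + 1) (mu A S2 + 1)"
proof (rule ccontr)
  let ?p = "DIM('a)"
  define P where "P = (\<lambda>B :: 'a set set. \<forall>x. \<Inter>B = {x} \<longrightarrow> x \<in> S1)"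
  obtain A' where A': "A' \<subseteq> A" "vertices A' \<subseteq> S1 \<union> S2" "card A' = mu A (S1 \<union> S2)"
    using mu_attained[OF assms] by blast
  assume "\<not> ?thesis"
  then have "card A' \<ge> ramsey_number ?p (mu A S1 + 1) (mu A S2 + 1)"
    using A'(3) by linarith
  moreover have "finite A'" using A'(1) assms finite_subset by blast
  ultimately obtain T where T: "T \<subseteq> A'"
    and hom: "(card T = mu A S1 + 1 \<and> homogeneous ?p P T) \<or>
              (card T = mu A S2 + 1 \<and> homogeneous ?p (\<lambda>B. \<not> P B) T)"
    using ramsey_number_colouring[where P = P] by blast
  have TA: "T \<subseteq> A" using T A'(1) by blast
  show False
    using hom
  proof
    assume T1: "card T = mu A S1 + 1 \<and> homogeneous ?p P T"
    then have "vertices T \<subseteq> S1"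
      using vertices_subset_iff_homogeneous[of T S1] P_def by simp
    then show False using mu_ge[OF assms TA, of S1] T1 by simp
  next
    assume T2: "card T = mu A S2 + 1 \<and> homogeneous ?p (\<lambda>B. \<not> P B) T"
    have "homogeneous ?p (\<lambda>B. \<forall>x. \<Inter>B = {x} \<longrightarrow> x \<in> - S1) T"
      by (rule homogeneous_mono[OF conjunct2[OF T2]]) (auto simp: P_def)
    then have "vertices T \<subseteq> - S1"
      using vertices_subset_iff_homogeneous by blast
    moreover have "vertices T \<subseteq> S1 \<union> S2" using vertices_mono[OF T] A'(2) by blast
    ultimately have "vertices T \<subseteq> S2" by blast
    then show False using mu_ge[OF assms TA, of S2] T2 by simp
  qed
qed

theorem lemma2:
  fixes A :: "'a::euclidean_space set set" and S1 S2 :: "'a set"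
  assumes "DIM('a) \<ge> 2"
    and "finite A"
    and "\<forall>H\<in>A. is_hyperplane H"
    and "is_open_halfspace S1"
  shows "mu A (S1 \<union> S2) \<le> ramsey_number DIM('a) (mu A S1 + 1) (mu A S2 + 1) - 1"
  using mu_union_less_ramsey_number[OF assms(2), of S1 S2] by linarith

end
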